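(* Let $\mathbf{P}\subset\mathbb{C}$ be a Jordan arc and let $A\colon\mathbf{P}\to\mathbb{C}^{n\times n}$ and $b\colon\mathbf{P}\to\mathbb{C}^{n}$ be continuous such that $(A(\theta),b(\theta))$ is reachable for every $\theta\in\mathbf{P}$ (i.e. $\operatorname{rank}(b(\theta),A(\theta)b(\theta),\dots,A(\theta)^{n-1}b(\theta))=n$). Then there exists a continuous row vector $f\colon\mathbf{P}\to\mathbb{C}^{1\times n}$ such that the pair $(A+bf,b)$ is uniformly ensemble reachable.
   Context: A Jordan arc is the image of a continuous injective map from a compact interval into $\mathbb{C}$. For continuous $A\colon\mathbf{P}\to\mathbb{C}^{n\times n}$, $B\colon\mathbf{P}\to\mathbb{C}^{n\times m}$, the pair $(A,B)$ is uniformly ensemble reachable (from zero) if for every continuous $f\colon\mathbf{P}\to\mathbb{C}^n$ and every $\varepsilon>0$ there exist $T>0$ and an input $u$ such that $\sup_{\theta\in\mathbf{P}}\|\varphi(T,0,u)(\theta)-f(\theta)\|<\varepsilon$. Here, for the continuous-time system $\partial_t x(t,\theta)=A(\theta)x(t,\theta)+B(\theta)u(t)$, $x(0,\theta)=0$, one takes $u\in L^1([0,T],\mathbb{C}^m)$ and $\varphi(T,0,u)(\theta)=\int_0^T e^{A(\theta)(T-s)}B(\theta)u(s)\,ds$; for the discrete-time system $x_{t+1}(\theta)=A(\theta)x_t(\theta)+B(\theta)u_t$, $x_0(\theta)=0$, one takes $T\in\mathbb{N}$, $u=(u_0,\dots,u_{T-1})$, $u_i\in\mathbb{C}^m$, and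 $\varphi(T,0,u)(\theta)=\sum_{k=0}^{T-1}A(\theta)^kB(\theta)u_{T-1-k}$. The result holds for either notion. The input $u$ is independent of $\theta$. *)

theory Defs
  imports "HOL-Analysis.Analysis"
begin

definition matpow :: "'a::semiring_1^'n^'n \<Rightarrow> nat \<Rightarrow> 'a^'n^'n" where
  "matpow A k = ((\<lambda>M. M ** A) ^^ k) (mat 1)"

definition matexp :: "complex^'n^'n \<Rightarrow> complex^'n^'n" where
  "matexp M = (\<Sum>k. (1 / fact k) *\<^sub>R matpow M k)"

text \<open>Reachability of a single-input pair (A,b): the Kalman matrix
  (b, Ab, ..., A^(n-1) b) has rank n, i.e. its column space
  (spanned by the vectors A^k b, k < n) has dimension n.\<close>
definition reachable_pair :: "complex^'n^'n \<Rightarrow> complex^'n \<Rightarrow> bool" where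
  "reachable_pair A b \<longleftrightarrow> vec.dim {matpow A k *v b | k. k < CARD('n)} = CARD('n)"

definition outer :: "complex^'n \<Rightarrow> complex^'n \<Rightarrow> complex^'n^'n" where
  "outer b f = (\<chi> i j. b $ i * f $ j)"

text \<open>Endpoint of the continuous-time system from zero with scalar input u on [0,T].\<close>
definition ct_endpoint :: "complex^'n^'n \<Rightarrow> complex^'n \<Rightarrow> real \<Rightarrow> (real \<Rightarrow> complex) \<Rightarrow> complex^'n" where
  "ct_endpoint A b T u = integral {0..T} (\<lambda>s. u s *s (matexp ((T - s) *\<^sub>R A) *v b))"

text \<open>Endpoint of the discrete-time system from zero with inputs u_0,...,u_(T-1).\<close>
definition dt_endpoint :: "complex^'n^'n \<Rightarrow> complex^'n \<Rightarrow> nat \<Rightarrow> (nat \<Rightarrow> complex) \<Rightarrow> complex^'n" where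
  "dt_endpoint A b T u = (\<Sum>k<T. u (T - 1 - k) *s (matpow A k *v b))"

definition UER_ct :: "complex set \<Rightarrow> (complex \<Rightarrow> complex^'n^'n) \<Rightarrow> (complex \<Rightarrow> complex^'n) \<Rightarrow> bool" where
  "UER_ct P A b \<longleftrightarrow>
     (\<forall>g::complex \<Rightarrow> complex^'n. continuous_on P g \<longrightarrow>
        (\<forall>\<epsilon>>0. \<exists>T>0. \<exists>u. u absolutely_integrable_on {0..T} \<and>
           (SUP \<theta>\<in>P. norm (ct_endpoint (A \<theta>) (b \<theta>) T u - g \<theta>)) < \<epsilon>))"

definition UER_dt :: "complex set \<Rightarrow> (complex \<Rightarrow> complex^'n^'n) \<Rightarrow> (complex \<Rightarrow> complex^'n) \<Rightarrow> bool" where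
  "UER_dt P A b \<longleftrightarrow>
     (\<forall>g::complex \<Rightarrow> complex^'n. continuous_on P g \<longrightarrow>
        (\<forall>\<epsilon>>0. \<exists>T::nat. \<exists>u::nat \<Rightarrow> complex.
           (SUP \<theta>\<in>P. norm (dt_endpoint (A \<theta>) (b \<theta>) T u - g \<theta>)) < \<epsilon>))"

end

(* Pole placement.  For each parameter choose distinct real poles lam_k(theta), continuous in
   theta and beyond a bound for the spectrum of A(theta), and the feedback f(theta) that turns the
   resolvent vectors u_k = (A - lam_k)^-1 b into eigenvectors of A + b f.  Reachability makes the
   u_k a basis in which b has only nonzero coordinates mu_k.  An input independent of theta then
   steers the closed loop to  sum_k mu_k phi(lam_k) u_k,  where phi is the transfer function of the
   input: an arbitrary polynomial in discrete time, and (e^l - 1)/l times a polynomial in e^l for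
   step inputs in continuous time.  Along the arc the poles sweep pairwise disjoint intervals, so
   every continuous target becomes one continuous function on their union, which Stone-Weierstrass
   approximates uniformly by such transfer functions. *)

theory Submission
  imports Defs "HOL-Computational_Algebra.Polynomial"
begin

section \<open>Matrix powers and polynomials of a matrix\<close>

lemma matrix_vector_mult_sum:
  "(A::'a::semiring_1^'n^'m) *v (\<Sum>k\<in>S. v k) = (\<Sum>k\<in>S. A *v v k)"
  by (induction S rule: infinite_finite_induct) (auto simp: matrix_vector_right_distrib)

lemma mat_mult_vec: "(mat l :: 'a::semiring_1^'n^'n) *v x = l *s x"
proof -
  have "(\<Sum>j\<in>UNIV. (if i = j then l else 0) * x$j) = (\<Sum>j\<in>UNIV. if i = j then l * x$j else 0)" for i
    by (rule sum.cong) auto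
  then show ?thesis
    by (simp add: vec_eq_iff matrix_vector_mult_def mat_def)
qed

lemma matpow_0 [simp]: "matpow A 0 = mat 1"
  by (simp add: matpow_def)

lemma matpow_Suc: "matpow A (Suc k) = matpow A k ** A"
  by (simp add: matpow_def)

lemma matpow_Suc': "matpow (A::'a::semiring_1^'n^'n) (Suc k) = A ** matpow A k"
proof (induction k)
  case 0
  then show ?case by (simp add: matpow_Suc)
next
  case (Suc k)
  have "matpow A (Suc (Suc k)) = (A ** matpow A k) ** A"
    by (simp only: matpow_Suc[of A "Suc k"] Suc)
  also have "\<dots> = A ** matpow A (Suc k)"
    by (simp add: matpow_Suc matrix_mul_assoc)
  finally show ?case .
qed

lemma matpow_Suc_mult_vec:
  "matpow (A::'a::comm_semiring_1^'n^'n) (Suc k) *v v = matpow A k *v (A *v v)"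
  by (simp add: matpow_Suc matrix_vector_mul_assoc)

lemma matpow_Suc_mult_vec':
  "matpow (A::'a::comm_semiring_1^'n^'n) (Suc k) *v v = A *v (matpow A k *v v)"
  by (simp add: matpow_Suc' matrix_vector_mul_assoc)

lemma matpow_mult_eigenvector:
  fixes A :: "'a::field^'n^'n"
  assumes "A *v u = l *s u"
  shows "matpow A k *v u = (l ^ k) *s u"
  by (induction k) (auto simp: matpow_Suc_mult_vec' assms vector_scalar_commute mult.commute)

definition poly_mat_vec :: "'a::field poly \<Rightarrow> 'a^'n^'n \<Rightarrow> 'a^'n \<Rightarrow> 'a^'n" where
  "poly_mat_vec p A v = (\<Sum>i\<le>degree p. coeff p i *s (matpow A i *v v))"

lemma poly_mat_vec_eq_sum_lessThan:
  assumes "degree p < m"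
  shows "poly_mat_vec p A v = (\<Sum>i<m. coeff p i *s (matpow A i *v v))"
  unfolding poly_mat_vec_def using assms
  by (intro sum.mono_neutral_right[symmetric]) (auto simp: coeff_eq_0)

lemma poly_mat_vec_0 [simp]: "poly_mat_vec 0 A v = 0"
  by (simp add: poly_mat_vec_def)

lemma poly_mat_vec_const: "poly_mat_vec [:c:] A v = c *s v"
  by (simp add: poly_mat_vec_def)

lemma poly_mat_vec_add: "poly_mat_vec (p + q) A v = poly_mat_vec p A v + poly_mat_vec q A v"
proof -
  define m where "m = Suc (max (degree p) (degree q))"
  have "degree (p + q) < m" "degree p < m" "degree q < m"
    using degree_add_le_max[of p q] by (auto simp: m_def)
  then show ?thesis
    by (simp add: poly_mat_vec_eq_sum_lessThan[of _ m] sum.distrib vector_sadd_rdistrib)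
qed

lemma poly_mat_vec_smult: "poly_mat_vec (smult c p) A v = c *s poly_mat_vec p A v"
proof -
  have "degree (smult c p) < Suc (degree p)" "degree p < Suc (degree p)"
    using degree_smult_le[of c p] by auto
  then show ?thesis
    by (simp add: poly_mat_vec_eq_sum_lessThan[of _ "Suc (degree p)"] vec_eq_iff
        sum_distrib_left algebra_simps)
qed

lemma poly_mat_vec_diff: "poly_mat_vec (p - q) A v = poly_mat_vec p A v - poly_mat_vec q A v"
  using poly_mat_vec_add[of "p - q" q A v] by simp

lemma poly_mat_vec_sum: "poly_mat_vec (\<Sum>k\<in>S. p k) A v = (\<Sum>k\<in>S. poly_mat_vec (p k) A v)"
  by (induction S rule: infinite_finite_induct) (auto simp: poly_mat_vec_add)

lemma poly_mat_vec_add_vec: "poly_mat_vec p A (x + y) = poly_mat_vec p A x + poly_mat_vec p A y"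
  by (simp add: poly_mat_vec_def matrix_vector_right_distrib sum.distrib vec_eq_iff algebra_simps)

lemma poly_mat_vec_scale_vec: "poly_mat_vec p A (c *s x) = c *s poly_mat_vec p A x"
  by (simp add: poly_mat_vec_def vector_scalar_commute vec_eq_iff sum_distrib_left algebra_simps)

lemma poly_mat_vec_zero_vec [simp]: "poly_mat_vec p A 0 = 0"
  by (simp add: poly_mat_vec_def)

lemma poly_mat_vec_sum_vec: "poly_mat_vec p A (\<Sum>k\<in>S. x k) = (\<Sum>k\<in>S. poly_mat_vec p A (x k))"
  by (induction S rule: infinite_finite_induct) (auto simp: poly_mat_vec_add_vec)

lemma poly_mat_vec_commute: "poly_mat_vec p A (A *v v) = A *v poly_mat_vec p A v"
  by (simp add: poly_mat_vec_def matrix_vector_mult_sum vector_scalar_commute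
      matpow_Suc_mult_vec[symmetric] matpow_Suc_mult_vec'[symmetric])

lemma poly_mat_vec_pCons: "poly_mat_vec (pCons a p) A v = a *s v + poly_mat_vec p A (A *v v)"
proof -
  define m where "m = Suc (degree p)"
  have d1: "degree (pCons a p) < Suc m" and d2: "degree p < m"
    by (auto simp: m_def degree_pCons_le le_less_trans)
  have "poly_mat_vec (pCons a p) A v = (\<Sum>i<Suc m. coeff (pCons a p) i *s (matpow A i *v v))"
    by (rule poly_mat_vec_eq_sum_lessThan[OF d1])
  also have "\<dots> = a *s v + (\<Sum>i<m. coeff p i *s (matpow A (Suc i) *v v))"
    by (subst sum.lessThan_Suc_shift) simp
  also have "\<dots> = a *s v + poly_mat_vec p A (A *v v)"
    by (simp add: poly_mat_vec_eq_sum_lessThan[OF d2] matpow_Suc_mult_vec)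
  finally show ?thesis .
qed

lemma poly_mat_vec_mult: "poly_mat_vec (p * q) A v = poly_mat_vec p A (poly_mat_vec q A v)"
proof (induction p arbitrary: v)
  case 0
  then show ?case by simp
next
  case (pCons a p)
  have "pCons a p * q = smult a q + pCons 0 (p * q)"
    by simp
  then have "poly_mat_vec (pCons a p * q) A v = a *s poly_mat_vec q A v + poly_mat_vec (p * q) A (A *v v)"
    by (simp add: poly_mat_vec_add poly_mat_vec_smult poly_mat_vec_pCons)
  also have "\<dots> = a *s poly_mat_vec q A v + poly_mat_vec p A (A *v poly_mat_vec q A v)"
    using pCons.IH by (simp add: poly_mat_vec_commute)
  also have "\<dots> = poly_mat_vec (pCons a p) A (poly_mat_vec q A v)"
    by (simp add: poly_mat_vec_pCons)
  finally show ?case .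
qed

lemma poly_mat_vec_linear_factor: "poly_mat_vec [:-l, 1:] A v = A *v v - l *s v"
  by (simp add: poly_mat_vec_pCons poly_mat_vec_const poly_mat_vec_def matpow_Suc)

section \<open>Reachability and the Krylov vectors\<close>

lemma reachable_pair_krylov_independent:
  fixes A :: "complex^'n^'n" and b :: "complex^'n"
  defines "w \<equiv> \<lambda>k. matpow A k *v b"
  assumes "reachable_pair A b"
  shows "inj_on w {..<CARD('n)}" and "vec.independent (w ` {..<CARD('n)})"
proof -
  let ?S = "w ` {..<CARD('n)}"
  have "{matpow A k *v b | k. k < CARD('n)} = ?S"
    by (auto simp: w_def)
  then have "vec.dim ?S = CARD('n)"
    using assms(2) by (simp add: reachable_pair_def)
  moreover have "vec.dim ?S \<le> card ?S" "card ?S \<le> CARD('n)"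
    using vec.dim_le_card'[of ?S] card_image_le[of "{..<CARD('n)}" w] by auto
  ultimately have card: "card ?S = CARD('n)" and "vec.dim ?S = card ?S"
    by linarith+
  then show "inj_on w {..<CARD('n)}"
    by (intro eq_card_imp_inj_on) auto
  show "vec.independent ?S"
    using vec.card_eq_dim[of ?S ?S] card \<open>vec.dim ?S = CARD('n)\<close> vec.span_superset
    by (metis finite_imageI finite_lessThan order_refl)
qed

lemma reachable_pair_poly_mat_vec_eq_0:
  fixes A :: "complex^'n^'n"
  assumes reach: "reachable_pair A b" and zero: "poly_mat_vec p A b = 0"
    and deg: "degree p < CARD('n)"
  shows "p = 0"
proof -
  define w where "w = (\<lambda>k. matpow A k *v b)"
  let ?N = "{..<CARD('n)}"
  have inj: "inj_on w ?N" and indep: "vec.independent (w ` ?N)"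
    using reachable_pair_krylov_independent[OF reach] by (simp_all add: w_def)
  have "(\<Sum>v\<in>w ` ?N. coeff p (the_inv_into ?N w v) *s v) = (\<Sum>i\<in>?N. coeff p i *s w i)"
    using inj by (subst sum.reindex) (auto simp: the_inv_into_f_f)
  also have "\<dots> = 0"
    using zero deg by (simp add: poly_mat_vec_eq_sum_lessThan w_def)
  finally have sum_zero: "(\<Sum>v\<in>w ` ?N. coeff p (the_inv_into ?N w v) *s v) = 0" .
  have "\<forall>c. (\<Sum>v\<in>w ` ?N. c v *s v) = 0 \<longrightarrow> (\<forall>v\<in>w ` ?N. c v = 0)"
    using indep by (simp add: vec.independent_explicit)
  from this[rule_format, OF sum_zero] have "\<forall>i<CARD('n). coeff p i = 0"
    using inj by (metis image_eqI lessThan_iff the_inv_into_f_f)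
  then show ?thesis
    using deg by (intro poly_eqI) (metis coeff_0 coeff_eq_0 le_less_trans not_less)
qed

section \<open>Resolvent vectors of a reachable pair\<close>

definition node_poly :: "('n \<Rightarrow> 'a::comm_ring_1) \<Rightarrow> 'n set \<Rightarrow> 'a poly" where
  "node_poly lam S = (\<Prod>j\<in>S. [:- lam j, 1:])"

lemma degree_node_poly_le: "degree (node_poly lam S) \<le> card S"
proof (cases "finite S")
  case True
  then have "degree (node_poly lam S) \<le> sum (degree \<circ> (\<lambda>j. [:- lam j, 1:])) S"
    unfolding node_poly_def by (rule degree_prod_sum_le)
  then show ?thesis by simp
qed (simp add: node_poly_def)

lemma degree_node_poly: "finite S \<Longrightarrow> degree (node_poly (lam::'n \<Rightarrow> 'a::idom) S) = card S"
  unfolding node_poly_def by (subst degree_prod_eq_sum_degree) auto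

lemma lead_coeff_node_poly: "lead_coeff (node_poly (lam::'n \<Rightarrow> 'a::idom) S) = 1"
  unfolding node_poly_def by (simp add: lead_coeff_prod)

lemma poly_node_poly: "poly (node_poly lam S) x = (\<Prod>j\<in>S. x - lam j)"
  unfolding node_poly_def by (simp add: poly_prod)

lemma poly_mat_vec_node_poly_resolvents:
  fixes A :: "'a::field^'n^'n"
  assumes res: "\<And>k. k \<in> S \<Longrightarrow> A *v u k - lam k *s u k = b" and "finite S"
  shows "poly_mat_vec (node_poly lam S) A (\<Sum>k\<in>S. c k *s u k)
       = (\<Sum>k\<in>S. c k *s poly_mat_vec (node_poly lam (S - {k})) A b)"
proof -
  have "poly_mat_vec (node_poly lam S) A (u k) = poly_mat_vec (node_poly lam (S - {k})) A b"
    if "k \<in> S" for k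
  proof -
    have "node_poly lam S = node_poly lam (S - {k}) * [:- lam k, 1:]"
      unfolding node_poly_def using \<open>finite S\<close> that by (simp add: prod.remove mult.commute)
    then show ?thesis
      by (simp only: poly_mat_vec_mult poly_mat_vec_linear_factor res[OF that])
  qed
  then show ?thesis
    by (simp add: poly_mat_vec_sum_vec poly_mat_vec_scale_vec)
qed

text \<open>A relation among the u k, or between them and b, becomes an identity p(A) b = 0 with
  degree p < n; reachability forces p = 0, and evaluating p at the lam k concludes.\<close>

context
  fixes A :: "complex^'n^'n" and b :: "complex^'n"
    and lam :: "'n \<Rightarrow> complex" and u :: "'n \<Rightarrow> complex^'n"
  assumes reachable: "reachable_pair A b" and inj_lam: "inj lam"
    and resolvent: "\<And>k. A *v u k - lam k *s u k = b"
begin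

lemma resolvent_vectors_independent:
  assumes "(\<Sum>k\<in>UNIV. a k *s u k) = 0"
  shows "a m = 0"
proof -
  define R where "R = (\<Sum>k\<in>UNIV. smult (a k) (node_poly lam (UNIV - {k})))"
  have "poly_mat_vec R A b = poly_mat_vec (node_poly lam UNIV) A (\<Sum>k\<in>UNIV. a k *s u k)"
    by (simp add: R_def poly_mat_vec_sum poly_mat_vec_smult
        poly_mat_vec_node_poly_resolvents[where S=UNIV, OF resolvent])
  also have "\<dots> = 0"
    using assms by simp
  finally have "poly_mat_vec R A b = 0" .
  moreover have "degree R < CARD('n)"
  proof -
    have "degree R \<le> CARD('n) - 1"
      unfolding R_def
      by (intro degree_sum_le) (auto intro: order.trans[OF degree_smult_le]
          order.trans[OF degree_node_poly_le] simp: card_Diff_singleton)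
    then show ?thesis
      using zero_less_card_finite[where 'a='n] by linarith
  qed
  ultimately have "R = 0"
    using reachable_pair_poly_mat_vec_eq_0[OF reachable] by blast
  have "poly R (lam m) = (\<Sum>k\<in>UNIV. a k * (\<Prod>j\<in>UNIV - {k}. lam m - lam j))"
    by (simp add: R_def poly_sum poly_node_poly)
  also have "\<dots> = a m * (\<Prod>j\<in>UNIV - {m}. lam m - lam j)"
    by (rule sum.mono_neutral_right[of UNIV "{m}", simplified]) (auto intro!: prod_zero)
  finally have "a m * (\<Prod>j\<in>UNIV - {m}. lam m - lam j) = 0"
    using \<open>R = 0\<close> by simp
  moreover have "(\<Prod>j\<in>UNIV - {m}. lam m - lam j) \<noteq> 0"
    using inj_lam by (auto simp: inj_def)
  ultimately show ?thesis
    by simp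
qed

lemma resolvent_expansion_coeff_nonzero:
  assumes expansion: "(\<Sum>k\<in>UNIV. \<mu> k *s u k) = b"
  shows "\<mu> m \<noteq> 0"
proof
  assume "\<mu> m = 0"
  let ?M = "UNIV - {m}" and ?N = "CARD('n)"
  define R where
    "R = node_poly lam ?M - (\<Sum>k\<in>?M. smult (\<mu> k) (node_poly lam (?M - {k})))"
  have "b = (\<Sum>k\<in>?M. \<mu> k *s u k)"
    using expansion \<open>\<mu> m = 0\<close> by (subst (asm) sum.mono_neutral_right[of UNIV ?M]) auto
  then have "poly_mat_vec (node_poly lam ?M) A b
      = (\<Sum>k\<in>?M. \<mu> k *s poly_mat_vec (node_poly lam (?M - {k})) A b)"
    using poly_mat_vec_node_poly_resolvents[where S="?M" and c=\<mu>, OF resolvent] by simp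
  then have "poly_mat_vec R A b = 0"
    by (simp add: R_def poly_mat_vec_diff poly_mat_vec_sum poly_mat_vec_smult)
  have deg_M: "degree (node_poly lam ?M) = ?N - 1"
    by (simp add: degree_node_poly card_Diff_singleton)
  have deg_Mk: "degree (node_poly lam (?M - {k})) < ?N - 1" if "k \<noteq> m" for k
  proof -
    have "card {m, k} \<le> ?N"
      by (rule card_mono) auto
    then show ?thesis
      using that degree_node_poly_le[of lam "?M - {k}"] by (simp add: card_Diff_singleton)
  qed
  have "degree R \<le> ?N - 1"
    unfolding R_def using deg_M deg_Mk
    by (intro degree_diff_le degree_sum_le)
      (auto intro: order.trans[OF degree_smult_le] less_imp_le)
  then have "degree R < ?N"
    using zero_less_card_finite[where 'a='n] by linarith
  with \<open>poly_mat_vec R A b = 0\<close> have "R = 0"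
    using reachable_pair_poly_mat_vec_eq_0[OF reachable] by blast
  moreover have "coeff R (?N - 1) = 1"
    using lead_coeff_node_poly[of lam ?M] deg_M deg_Mk
    by (simp add: R_def coeff_sum coeff_eq_0)
  ultimately show False
    by simp
qed

end

section \<open>Cramer's rule and continuity\<close>

definition cramer_solve :: "'a::field^'n^'n \<Rightarrow> 'a^'n \<Rightarrow> 'a^'n" where
  "cramer_solve M v = (\<chi> k. det (\<chi> i j. if j = k then v$i else M$i$j) / det M)"

lemma matrix_vector_mult_cramer_solve:
  assumes "det M \<noteq> 0"
  shows "M *v cramer_solve M v = v"
  using cramer[OF assms, of "cramer_solve M v" v] by (simp add: cramer_solve_def)

lemma det_nonzero_if_kernel_trivial:
  fixes M :: "'a::field^'n^'n"
  assumes "\<And>x. M *v x = 0 \<Longrightarrow> x = 0"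
  shows "det M \<noteq> 0"
  using assms invertible_det_nz invertible_left_inverse matrix_left_invertible_ker by metis

lemma continuous_on_det:
  fixes M :: "_ \<Rightarrow> 'a::real_normed_field^'n^'n"
  assumes "continuous_on S M"
  shows "continuous_on S (\<lambda>x. det (M x))"
  unfolding det_def by (intro continuous_intros assms)

lemma continuous_on_cramer_solve:
  fixes M :: "_ \<Rightarrow> 'a::real_normed_field^'n^'n"
  assumes "continuous_on S M" "continuous_on S v" "\<And>x. x \<in> S \<Longrightarrow> det (M x) \<noteq> 0"
  shows "continuous_on S (\<lambda>x. cramer_solve (M x) (v x))"
proof -
  have "continuous_on S (\<lambda>x. if j = k then v x $ i else M x $ i $ j)" for i j k
    by (cases "j = k") (auto intro!: continuous_intros assms)
  then show ?thesis
    unfolding cramer_solve_def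
    by (intro continuous_on_vec_lambda continuous_on_divide continuous_on_det assms)
      (use assms(3) in auto)
qed

lemma continuous_on_mat:
  assumes "continuous_on S c"
  shows "continuous_on S (\<lambda>x. mat (c x) :: 'a::real_normed_vector^'n^'n)"
  unfolding mat_def
proof (intro continuous_on_vec_lambda)
  fix i j :: 'n
  show "continuous_on S (\<lambda>x. if i = j then c x else 0)"
    by (cases "i = j") (simp_all add: assms)
qed

lemma continuous_on_transpose:
  "continuous_on S M \<Longrightarrow> continuous_on S (\<lambda>x. transpose (M x) :: 'a::real_normed_vector^'n^'m)"
  unfolding transpose_def by (intro continuous_on_vec_lambda continuous_intros)

section \<open>An entrywise matrix norm and the matrix exponential\<close>

definition mat_l1norm :: "'a::real_normed_vector^'n^'m \<Rightarrow> real" where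
  "mat_l1norm M = (\<Sum>i\<in>UNIV. \<Sum>j\<in>UNIV. norm (M$i$j))"

lemma mat_l1norm_nonneg: "mat_l1norm M \<ge> 0"
  by (simp add: mat_l1norm_def sum_nonneg)

lemma norm_vec_le_sum_norm: "norm (x::'a::real_normed_vector^'n) \<le> (\<Sum>i\<in>UNIV. norm (x$i))"
  by (simp add: norm_vec_def L2_set_le_sum)

lemma norm_scale_vec: "norm (c *s (x::'a::real_normed_div_algebra^'n)) = norm c * norm x"
  by (simp add: norm_vec_def L2_set_right_distrib norm_mult)

lemma norm_le_mat_l1norm: "norm M \<le> mat_l1norm M"
proof -
  have "norm M \<le> (\<Sum>i\<in>UNIV. norm (M$i))"
    by (rule norm_vec_le_sum_norm)
  also have "\<dots> \<le> mat_l1norm M"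
    unfolding mat_l1norm_def by (intro sum_mono norm_vec_le_sum_norm)
  finally show ?thesis .
qed

lemma row_norm_le_mat_l1norm: "(\<Sum>j\<in>UNIV. norm (M$i$j)) \<le> mat_l1norm M"
  unfolding mat_l1norm_def
  by (rule member_le_sum[where f="\<lambda>i. \<Sum>j\<in>UNIV. norm (M$i$j)"]) (auto intro: sum_nonneg)

lemma mat_l1norm_mult:
  "mat_l1norm ((M::'a::real_normed_algebra_1^'k^'m) ** N) \<le> mat_l1norm M * mat_l1norm (N::'a^'n^'k)"
proof -
  have "mat_l1norm (M ** N) = (\<Sum>i\<in>UNIV. \<Sum>j\<in>UNIV. norm (\<Sum>k\<in>UNIV. M$i$k * N$k$j))"
    by (simp add: mat_l1norm_def matrix_matrix_mult_def)
  also have "\<dots> \<le> (\<Sum>i\<in>UNIV. \<Sum>j\<in>UNIV. \<Sum>k\<in>UNIV. norm (M$i$k) * norm (N$k$j))"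
    by (intro sum_mono order.trans[OF norm_sum] norm_mult_ineq)
  also have "\<dots> = (\<Sum>i\<in>UNIV. \<Sum>k\<in>UNIV. norm (M$i$k) * (\<Sum>j\<in>UNIV. norm (N$k$j)))"
    by (rule sum.cong[OF refl], subst sum.swap, simp add: sum_distrib_left)
  also have "\<dots> \<le> (\<Sum>i\<in>UNIV. \<Sum>k\<in>UNIV. norm (M$i$k) * mat_l1norm N)"
    by (intro sum_mono mult_left_mono row_norm_le_mat_l1norm) auto
  also have "\<dots> = mat_l1norm M * mat_l1norm N"
    by (simp add: mat_l1norm_def sum_distrib_right)
  finally show ?thesis .
qed

lemma mat_l1norm_matpow:
  "mat_l1norm (matpow (M::'a::real_normed_algebra_1^'n^'n) k) \<le> CARD('n) * mat_l1norm M ^ k"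
proof (induction k)
  case 0
  have "mat_l1norm (mat 1 :: 'a^'n^'n) = (\<Sum>i\<in>(UNIV::'n set). 1)"
    unfolding mat_l1norm_def mat_def
    by (intro sum.cong refl) (simp add: if_distrib sum.delta cong: if_cong)
  then show ?case
    by simp
next
  case (Suc k)
  have "mat_l1norm (matpow M (Suc k)) \<le> mat_l1norm (matpow M k) * mat_l1norm M"
    by (simp add: matpow_Suc mat_l1norm_mult)
  also have "\<dots> \<le> CARD('n) * mat_l1norm M ^ k * mat_l1norm M"
    by (intro mult_right_mono Suc mat_l1norm_nonneg)
  finally show ?case
    by (simp add: mult_ac)
qed

lemma eigenvalue_norm_le_mat_l1norm:
  fixes M :: "'a::real_normed_field^'n^'n"
  assumes eigen: "M *v x = l *s x" and "x \<noteq> 0"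
  shows "norm l \<le> mat_l1norm M"
proof -
  have "Max (range (\<lambda>j. norm (x$j))) \<in> range (\<lambda>j. norm (x$j))"
    by (intro Max_in) auto
  then obtain i where "Max (range (\<lambda>j. norm (x$j))) = norm (x$i)"
    by blast
  moreover have "norm (x$j) \<le> Max (range (\<lambda>j. norm (x$j)))" for j
    by (intro Max_ge) auto
  ultimately have max: "\<And>j. norm (x$j) \<le> norm (x$i)"
    by simp
  have "norm (x$i) > 0"
  proof (rule ccontr)
    assume "\<not> norm (x$i) > 0"
    then have "x$j = 0" for j
      using max[of j] by simp
    with \<open>x \<noteq> 0\<close> show False
      by (simp add: vec_eq_iff)
  qed
  have "norm l * norm (x$i) = norm ((M *v x)$i)"
    using eigen by (simp add: norm_mult)
  also have "\<dots> = norm (\<Sum>j\<in>UNIV. M$i$j * x$j)"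
    by (simp add: matrix_vector_mult_def)
  also have "\<dots> \<le> (\<Sum>j\<in>UNIV. norm (M$i$j)) * norm (x$i)"
    unfolding sum_distrib_right
    by (intro order.trans[OF norm_sum] sum_mono) (simp add: norm_mult mult_left_mono max)
  also have "\<dots> \<le> mat_l1norm M * norm (x$i)"
    by (intro mult_right_mono row_norm_le_mat_l1norm) simp
  finally show ?thesis
    using \<open>norm (x$i) > 0\<close> by simp
qed

lemma det_minus_mat_nonzero:
  fixes A :: "'a::real_normed_field^'n^'n"
  assumes "norm l > mat_l1norm A"
  shows "det (A - mat l) \<noteq> 0"
proof (rule det_nonzero_if_kernel_trivial, rule ccontr)
  fix x
  assume "(A - mat l) *v x = 0" "x \<noteq> 0"
  then have "A *v x = l *s x"
    by (simp add: matrix_vector_mult_diff_rdistrib mat_mult_vec)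
  with \<open>x \<noteq> 0\<close> assms show False
    using eigenvalue_norm_le_mat_l1norm by fastforce
qed

lemma summable_matexp_series:
  "summable (\<lambda>k. (1 / fact k) *\<^sub>R matpow (M::complex^'n^'n) k)"
proof (rule summable_comparison_test')
  show "summable (\<lambda>k. CARD('n) * (inverse (fact k) * mat_l1norm M ^ k))"
    by (intro summable_mult summable_exp)
  fix k :: nat
  have "norm ((1 / fact k) *\<^sub>R matpow M k) = (1 / fact k) * norm (matpow M k)"
    by simp
  also have "\<dots> \<le> (1 / fact k) * (CARD('n) * mat_l1norm M ^ k)"
    by (intro mult_left_mono order.trans[OF norm_le_mat_l1norm mat_l1norm_matpow]) auto
  finally show "norm ((1 / fact k) *\<^sub>R matpow M k) \<le> CARD('n) * (inverse (fact k) * mat_l1norm M ^ k)"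
    by (simp add: field_simps)
qed

lemma scaleR_matrix_vector_mult: "((t::real) *\<^sub>R (M::complex^'n^'m)) *v u = of_real t *s (M *v u)"
  by (simp add: vec_eq_iff matrix_vector_mult_def scaleR_conv_of_real[where 'a=complex] sum_distrib_left mult_ac)

lemma bounded_linear_mult_vec_left: "bounded_linear (\<lambda>X::complex^'n^'m. X *v u)"
proof -
  have "linear (\<lambda>X::complex^'n^'m. X *v u)"
    by (rule linearI) (simp_all add: matrix_vector_mult_add_rdistrib vec_eq_iff
        matrix_vector_mult_def scaleR_conv_of_real[where 'a=complex] sum_distrib_left
        sum.distrib algebra_simps)
  then show ?thesis
    by (simp add: linear_conv_bounded_linear)
qed

lemma bounded_linear_scale_vec: "bounded_linear (\<lambda>c::complex. (a * c) *s (v::complex^'n))"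
proof -
  have "linear (\<lambda>c::complex. (a * c) *s v)"
    by (rule linearI) (simp_all add: vec_eq_iff scaleR_conv_of_real[where 'a=complex] algebra_simps)
  then show ?thesis
    by (simp add: linear_conv_bounded_linear)
qed

lemma matexp_mult_eigenvector:
  assumes "(M::complex^'n^'n) *v u = l *s u"
  shows "matexp (t *\<^sub>R M) *v u = exp (of_real t * l) *s u"
proof -
  have eigen: "(t *\<^sub>R M) *v u = (of_real t * l) *s u"
    by (simp add: scaleR_matrix_vector_mult assms)
  have "((1 / fact k) *\<^sub>R matpow (t *\<^sub>R M) k) *v u = (1 * ((of_real t * l)^k /\<^sub>R fact k)) *s u" for k
    by (simp add: scaleR_matrix_vector_mult matpow_mult_eigenvector[OF eigen]
        scaleR_conv_of_real[where 'a=complex] divide_inverse mult_ac)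
  then have "matexp (t *\<^sub>R M) *v u = (\<Sum>k. (1 * ((of_real t * l)^k /\<^sub>R fact k)) *s u)"
    unfolding matexp_def
    by (simp add: bounded_linear.suminf[OF bounded_linear_mult_vec_left summable_matexp_series])
  also have "\<dots> = (1 * exp (of_real t * l)) *s u"
    using bounded_linear.sums[OF bounded_linear_scale_vec exp_converges] by (rule sums_unique[symmetric])
  finally show ?thesis
    by simp
qed

section \<open>Step inputs\<close>

definition step_input :: "nat \<Rightarrow> (nat \<Rightarrow> complex) \<Rightarrow> real \<Rightarrow> complex" where
  "step_input m a s = a (m - Suc (nat \<lfloor>s\<rfloor>))"

lemma step_input_eq:
  assumes "s \<in> {real j..<real j + 1}"
  shows "step_input m a s = a (m - Suc j)"
proof -
  have "\<lfloor>s\<rfloor> = int j"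
    using assms by (intro floor_unique) auto
  then show ?thesis
    by (simp add: step_input_def)
qed

lemma has_integral_unit_pieces:
  fixes F :: "real \<Rightarrow> 'a::banach"
  assumes "\<And>j. j < n \<Longrightarrow> (g j has_integral I j) {real j..real j + 1}"
    and "\<And>s j. j < n \<Longrightarrow> s \<in> {real j..<real j + 1} \<Longrightarrow> F s = g j s"
  shows "(F has_integral (\<Sum>j<n. I j)) {0..real n}"
  using assms
proof (induction n)
  case 0
  then show ?case
    by (auto intro: has_integral_refl)
next
  case (Suc n)
  have IH: "(F has_integral (\<Sum>j<n. I j)) {0..real n}"
    using Suc.prems by (intro Suc.IH) auto
  have "(F has_integral I n) {real n..real n + 1}"
  proof (rule has_integral_spike_finite[of "{real n + 1}"])
    show "(g n has_integral I n) {real n..real n + 1}"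
      using Suc.prems(1) by simp
    show "F x = g n x" if "x \<in> {real n..real n + 1} - {real n + 1}" for x
      using Suc.prems(2)[of n x] that by auto
  qed simp
  then show ?case
    using has_integral_combine[OF _ _ IH, of "real (Suc n)"] by (simp add: add.commute)
qed

lemma has_integral_exp_unit_interval:
  fixes l :: complex and T j :: real
  assumes "l \<noteq> 0"
  shows "((\<lambda>s. exp (of_real (T - s) * l)) has_integral
          exp (of_real (T - j - 1) * l) * ((exp l - 1) / l)) {j..j + 1}"
proof -
  define F where "F = (\<lambda>z::complex. - exp ((of_real T - z) * l) / l)"
  have "(F has_field_derivative exp ((of_real T - z) * l)) (at z)" for z
    unfolding F_def using assms by (auto intro!: derivative_eq_intros simp: field_simps)
  then have "((\<lambda>s. exp ((of_real T - of_real s) * l)) has_integral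
      F (of_real (j + 1)) - F (of_real j)) {j..j + 1}"
    by (intro fundamental_theorem_of_calculus) (auto intro!: has_vector_derivative_real_field)
  moreover have "exp ((of_real T - of_real j) * l) = exp (of_real (T - j - 1) * l) * exp l"
    by (simp add: exp_add[symmetric] algebra_simps)
  ultimately show ?thesis
    using assms by (simp add: F_def field_simps)
qed

text \<open>The step input holds a (m - 1 - j) on [j, j + 1); the reversal makes the response
  at a nonzero eigenvalue l equal to (exp l - 1) / l times the polynomial of the a i in exp l.\<close>

lemma step_input_exp_has_integral:
  fixes l :: complex
  assumes "l \<noteq> 0"
  shows "((\<lambda>s. step_input m a s * exp (of_real (real m - s) * l)) has_integral
           (exp l - 1) / l * (\<Sum>i<m. a i * exp l ^ i)) {0..real m}"
proof -
  have piece: "exp (of_real (real m - real j - 1) * l) = exp l ^ (m - Suc j)" if "j < m" for j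
  proof -
    have "of_real (real m - real j - 1) = (of_nat (m - Suc j) :: complex)"
      using that by (simp add: of_nat_diff)
    then show ?thesis
      by (simp add: exp_of_nat_mult[symmetric])
  qed
  have "((\<lambda>s. step_input m a s * exp (of_real (real m - s) * l)) has_integral
      (\<Sum>j<m. a (m - Suc j) * (exp (of_real (real m - real j - 1) * l) * ((exp l - 1) / l))))
      {0..real m}"
  proof (rule has_integral_unit_pieces)
    fix j
    show "((\<lambda>s. a (m - Suc j) * exp (of_real (real m - s) * l)) has_integral
        a (m - Suc j) * (exp (of_real (real m - real j - 1) * l) * ((exp l - 1) / l)))
        {real j..real j + 1}"
      by (intro has_integral_mult_right has_integral_exp_unit_interval assms)
  qed (simp add: step_input_eq)
  also have "(\<Sum>j<m. a (m - Suc j) * (exp (of_real (real m - real j - 1) * l) * ((exp l - 1) / l)))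
      = (\<Sum>j<m. a (m - Suc j) * exp l ^ (m - Suc j)) * ((exp l - 1) / l)"
  proof -
    have "a (m - Suc j) * (exp (of_real (real m - real j - 1) * l) * ((exp l - 1) / l))
        = a (m - Suc j) * exp l ^ (m - Suc j) * ((exp l - 1) / l)" if "j \<in> {..<m}" for j
      using that by (simp only: lessThan_iff piece mult.assoc)
    then show ?thesis
      unfolding sum_distrib_right by (rule sum.cong[OF refl])
  qed
  also have "\<dots> = (exp l - 1) / l * (\<Sum>i<m. a i * exp l ^ i)"
    by (subst sum.nat_diff_reindex) (simp add: mult.commute)
  finally show ?thesis .
qed

lemma absolutely_integrable_step_input: "step_input m a absolutely_integrable_on {0..real m}"
proof (rule absolutely_integrable_integrable_bound)
  show "norm (step_input m a s) \<le> (\<Sum>i\<le>m. norm (a i))" for s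
    unfolding step_input_def by (rule member_le_sum) auto
  show "(\<lambda>_. \<Sum>i\<le>m. norm (a i)) integrable_on {0..real m}"
    by (rule integrable_const_ivl)
  have "(step_input m a has_integral (\<Sum>j<m. a (m - Suc j))) {0..real m}"
  proof (rule has_integral_unit_pieces)
    fix j
    show "((\<lambda>s. a (m - Suc j)) has_integral a (m - Suc j)) {real j..real j + 1}"
      using has_integral_const_real[of "a (m - Suc j)" "real j" "real j + 1"] by simp
  qed (simp add: step_input_eq)
  then show "step_input m a integrable_on {0..real m}"
    by blast
qed

section \<open>Pole placement for a single reachable pair\<close>

definition resolvent_vec :: "complex^'n^'n \<Rightarrow> complex^'n \<Rightarrow> complex \<Rightarrow> complex^'n" where
  "resolvent_vec A b l = cramer_solve (A - mat l) b"

definition resolvent_mat :: "complex^'n^'n \<Rightarrow> complex^'n \<Rightarrow> ('n \<Rightarrow> complex) \<Rightarrow> complex^'n^'n" where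
  "resolvent_mat A b lam = (\<chi> i k. resolvent_vec A b (lam k) $ i)"

definition resolvent_coords ::
    "complex^'n^'n \<Rightarrow> complex^'n \<Rightarrow> ('n \<Rightarrow> complex) \<Rightarrow> complex^'n \<Rightarrow> complex^'n" where
  "resolvent_coords A b lam v = cramer_solve (resolvent_mat A b lam) v"

text \<open>The feedback f is chosen with f u k = -1 for every resolvent vector u k, so that
  (A + b f) u k = A u k - b = lam k u k.\<close>

definition pole_feedback :: "complex^'n^'n \<Rightarrow> complex^'n \<Rightarrow> ('n \<Rightarrow> complex) \<Rightarrow> complex^'n" where
  "pole_feedback A b lam = cramer_solve (transpose (resolvent_mat A b lam)) (vec (-1))"

lemma resolvent_mat_mult_vec:
  "resolvent_mat A b lam *v a = (\<Sum>k\<in>UNIV. a$k *s resolvent_vec A b (lam k))"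
  by (simp add: vec_eq_iff resolvent_mat_def matrix_vector_mult_def mult.commute)

lemma outer_mult_vec: "outer b f *v x = (\<Sum>j\<in>UNIV. f$j * x$j) *s b"
  by (simp add: vec_eq_iff outer_def matrix_vector_mult_def sum_distrib_left mult_ac)

locale pole_placement =
  fixes A :: "complex^'n^'n" and b :: "complex^'n" and lam :: "'n \<Rightarrow> complex"
  assumes reachable: "reachable_pair A b" and inj_lam: "inj lam"
    and not_eigenvalue: "\<And>k. det (A - mat (lam k)) \<noteq> 0"
begin

abbreviation "u k \<equiv> resolvent_vec A b (lam k)"
abbreviation "coords \<equiv> resolvent_coords A b lam"
abbreviation "closed_loop \<equiv> A + outer b (pole_feedback A b lam)"

lemma resolvent_eq: "A *v u k - lam k *s u k = b"
  using matrix_vector_mult_cramer_solve[OF not_eigenvalue, of k b]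
  by (simp add: resolvent_vec_def matrix_vector_mult_diff_rdistrib mat_mult_vec)

lemma det_resolvent_mat_nonzero: "det (resolvent_mat A b lam) \<noteq> 0"
proof (rule det_nonzero_if_kernel_trivial)
  fix a
  assume "resolvent_mat A b lam *v a = 0"
  then have "a$m = 0" for m
    using resolvent_vectors_independent[OF reachable inj_lam resolvent_eq]
    by (simp add: resolvent_mat_mult_vec)
  then show "a = 0"
    by (simp add: vec_eq_iff)
qed

lemma resolvent_coords_expansion: "(\<Sum>k\<in>UNIV. coords v $ k *s u k) = v"
  using matrix_vector_mult_cramer_solve[OF det_resolvent_mat_nonzero, of v]
  by (simp add: resolvent_coords_def resolvent_mat_mult_vec)

lemma resolvent_coords_input_nonzero: "coords b $ k \<noteq> 0"
  using resolvent_expansion_coeff_nonzero[OF reachable inj_lam resolvent_eq]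
    resolvent_coords_expansion[of b] by blast

lemma closed_loop_eigenvector: "closed_loop *v u k = lam k *s u k"
proof -
  have "transpose (resolvent_mat A b lam) *v pole_feedback A b lam = vec (-1)"
    unfolding pole_feedback_def
    by (rule matrix_vector_mult_cramer_solve) (simp add: det_resolvent_mat_nonzero)
  then have "(\<Sum>j\<in>UNIV. pole_feedback A b lam $ j * u k $ j) = -1"
    by (simp add: vec_eq_iff matrix_vector_mult_def transpose_def resolvent_mat_def mult.commute)
  then have "closed_loop *v u k = A *v u k - b"
    by (simp add: matrix_vector_mult_add_rdistrib outer_mult_vec vector_sneg_minus1[symmetric])
  also have "\<dots> = lam k *s u k"
    using resolvent_eq[of k] by (simp add: algebra_simps)
  finally show ?thesis .
qed

lemma matpow_closed_loop_input: "matpow closed_loop j *v b = (\<Sum>k\<in>UNIV. (coords b $ k * lam k ^ j) *s u k)"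
  by (subst (1) resolvent_coords_expansion[of b, symmetric])
    (simp add: matrix_vector_mult_sum vector_scalar_commute
      matpow_mult_eigenvector[OF closed_loop_eigenvector])

lemma matexp_closed_loop_input:
  "matexp (t *\<^sub>R closed_loop) *v b = (\<Sum>k\<in>UNIV. (coords b $ k * exp (of_real t * lam k)) *s u k)"
  by (subst (1) resolvent_coords_expansion[of b, symmetric])
    (simp add: matrix_vector_mult_sum vector_scalar_commute
      matexp_mult_eigenvector[OF closed_loop_eigenvector])

lemma dt_endpoint_closed_loop:
  "dt_endpoint closed_loop b T w
     = (\<Sum>k\<in>UNIV. (coords b $ k * (\<Sum>j<T. w (T - 1 - j) * lam k ^ j)) *s u k)"
proof -
  have "dt_endpoint closed_loop b T w
      = (\<Sum>j<T. \<Sum>k\<in>UNIV. (w (T - 1 - j) * (coords b $ k * lam k ^ j)) *s u k)"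
    by (simp add: dt_endpoint_def matpow_closed_loop_input vec_eq_iff sum_distrib_left mult_ac)
  also have "\<dots> = (\<Sum>k\<in>UNIV. (coords b $ k * (\<Sum>j<T. w (T - 1 - j) * lam k ^ j)) *s u k)"
    by (subst sum.swap) (simp add: vec_eq_iff sum_distrib_left sum_distrib_right mult_ac)
  finally show ?thesis .
qed

lemma ct_endpoint_closed_loop:
  assumes "\<And>k. lam k \<noteq> 0"
  shows "ct_endpoint closed_loop b (real m) (step_input m a)
     = (\<Sum>k\<in>UNIV. (coords b $ k * ((exp (lam k) - 1) / lam k * (\<Sum>i<m. a i * exp (lam k) ^ i)))
          *s u k)"
proof -
  have "((\<lambda>s. (coords b $ k * (step_input m a s * exp (of_real (real m - s) * lam k))) *s u k)
      has_integral (coords b $ k * ((exp (lam k) - 1) / lam k * (\<Sum>i<m. a i * exp (lam k) ^ i)))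
        *s u k) {0..real m}" for k
    using has_integral_linear[OF step_input_exp_has_integral[OF assms]
        bounded_linear_scale_vec[of "coords b $ k" "u k"]]
    by (simp add: o_def)
  then have "((\<lambda>s. \<Sum>k\<in>UNIV. (coords b $ k * (step_input m a s * exp (of_real (real m - s) * lam k)))
      *s u k) has_integral (\<Sum>k\<in>UNIV. (coords b $ k * ((exp (lam k) - 1) / lam k
        * (\<Sum>i<m. a i * exp (lam k) ^ i))) *s u k)) {0..real m}"
    by (intro has_integral_sum) auto
  moreover have "(\<lambda>s. step_input m a s *s (matexp ((real m - s) *\<^sub>R closed_loop) *v b))
      = (\<lambda>s. \<Sum>k\<in>UNIV. (coords b $ k * (step_input m a s * exp (of_real (real m - s) * lam k))) *s u k)"
    by (simp add: matexp_closed_loop_input fun_eq_iff vec_eq_iff sum_distrib_left mult_ac)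
  ultimately show ?thesis
    unfolding ct_endpoint_def by (auto intro: integral_unique)
qed

end

section \<open>Uniform approximation on a compact set of reals\<close>

lemma complex_polynomial_approx:
  fixes H :: "real \<Rightarrow> complex"
  assumes K: "compact K" and H: "continuous_on K H" and "e > 0"
  obtains a n where "\<forall>x\<in>K. norm (H x - (\<Sum>i\<le>n. a i * of_real x ^ i)) < e"
proof -
  obtain g1 where g1: "real_polynomial_function g1" "\<And>x. x \<in> K \<Longrightarrow> \<bar>Re (H x) - g1 x\<bar> < e / 2"
    using Stone_Weierstrass_real_polynomial_function[OF K continuous_on_Re[OF H], of "e / 2"] \<open>e > 0\<close>
    by auto
  obtain g2 where g2: "real_polynomial_function g2" "\<And>x. x \<in> K \<Longrightarrow> \<bar>Im (H x) - g2 x\<bar> < e / 2"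
    using Stone_Weierstrass_real_polynomial_function[OF K continuous_on_Im[OF H], of "e / 2"] \<open>e > 0\<close>
    by auto
  obtain a1 n1 where a1: "g1 = (\<lambda>x. \<Sum>i\<le>n1. a1 i * x ^ i)"
    using real_polynomial_function_imp_sum[OF g1(1)] by blast
  obtain a2 n2 where a2: "g2 = (\<lambda>x. \<Sum>i\<le>n2. a2 i * x ^ i)"
    using real_polynomial_function_imp_sum[OF g2(1)] by blast
  define n where "n = n1 + n2"
  define p where "p i = (if i \<le> n1 then a1 i else 0)" for i
  define q where "q i = (if i \<le> n2 then a2 i else 0)" for i
  have g1_eq: "g1 x = (\<Sum>i\<le>n. p i * x ^ i)" and g2_eq: "g2 x = (\<Sum>i\<le>n. q i * x ^ i)" for x
    unfolding a1 a2 p_def q_def n_def by (auto intro!: sum.mono_neutral_cong_left split: if_split_asm)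
  define a where "a i = complex_of_real (p i) + \<i> * complex_of_real (q i)" for i
  have "(\<Sum>i\<le>n. a i * of_real x ^ i) = complex_of_real (g1 x) + \<i> * complex_of_real (g2 x)" for x
    unfolding g1_eq g2_eq a_def by (simp add: distrib_right sum.distrib sum_distrib_left mult.assoc)
  then have "norm (H x - (\<Sum>i\<le>n. a i * of_real x ^ i)) \<le> \<bar>Re (H x) - g1 x\<bar> + \<bar>Im (H x) - g2 x\<bar>" for x
    using cmod_le[of "H x - (complex_of_real (g1 x) + \<i> * complex_of_real (g2 x))"] by simp
  also have "\<bar>Re (H x) - g1 x\<bar> + \<bar>Im (H x) - g2 x\<bar> < e" if "x \<in> K" for x
    using g1(2)[OF that] g2(2)[OF that] by simp
  finally show ?thesis
    using that by blast
qed

lemma polynomial_transfer_dense: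
  fixes H :: "real \<Rightarrow> complex"
  assumes "compact K" "continuous_on K H" "\<delta> > 0"
  shows "\<exists>T w. \<forall>x\<in>K. norm ((\<Sum>j<T. w (T - 1 - j) * of_real x ^ j) - H x) < \<delta>"
proof -
  obtain a n where a: "\<forall>x\<in>K. norm (H x - (\<Sum>i\<le>n. a i * of_real x ^ i)) < \<delta>"
    using complex_polynomial_approx[OF assms] by blast
  have "(\<Sum>j<Suc n. a (n - (Suc n - 1 - j)) * of_real x ^ j) = (\<Sum>i\<le>n. a i * of_real x ^ i)" for x :: real
    by (simp only: lessThan_Suc_atMost) (intro sum.cong refl, simp)
  then show ?thesis
    using a by (intro exI[of _ "Suc n"] exI[of _ "\<lambda>i. a (n - i)"]) (simp add: norm_minus_commute)
qed

text \<open>Writing w = exp x turns the response into a polynomial in w times the nonvanishing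
  factor (exp x - 1) / x, so it suffices to approximate H / that factor by polynomials.\<close>

lemma exponential_transfer_dense:
  fixes H :: "real \<Rightarrow> complex"
  assumes K: "compact K" and pos: "\<And>x. x \<in> K \<Longrightarrow> x > 0" and H: "continuous_on K H" and "\<delta> > 0"
  shows "\<exists>m a. m > 0 \<and>
    (\<forall>x\<in>K. norm ((exp (of_real x) - 1) / of_real x * (\<Sum>i<m. a i * exp (of_real x) ^ i) - H x) < \<delta>)"
proof -
  define \<phi> where "\<phi> x = (exp (complex_of_real x) - 1) / complex_of_real x" for x
  have \<phi>_nonzero: "\<phi> x \<noteq> 0" if "x \<in> K" for x
  proof -
    have "exp x \<noteq> 1"
      using pos[OF that] by simp
    then have "exp (complex_of_real x) \<noteq> 1"
      by (metis exp_of_real of_real_eq_1_iff)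
    then show ?thesis
      using pos[OF that] by (simp add: \<phi>_def)
  qed
  have "continuous_on K \<phi>"
    unfolding \<phi>_def using pos by (intro continuous_intros) auto
  then have "bounded (\<phi> ` K)"
    by (intro compact_imp_bounded compact_continuous_image K)
  then obtain B where "B > 0" and B: "\<And>x. x \<in> K \<Longrightarrow> norm (\<phi> x) \<le> B"
    unfolding bounded_pos by auto
  define G where "G w = H (ln w) / \<phi> (ln w)" for w
  have "continuous_on (exp ` K) G"
    unfolding G_def using \<phi>_nonzero
    by (intro continuous_on_divide continuous_on_compose2[OF H] continuous_on_compose2[OF \<open>continuous_on K \<phi>\<close>]
        continuous_intros) auto
  moreover have "compact (exp ` K)"
    by (intro compact_continuous_image continuous_intros K)
  moreover have "\<delta> / B > 0"
    using \<open>\<delta> > 0\<close> \<open>B > 0\<close> by simp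
  ultimately obtain a n where a: "\<forall>w\<in>exp ` K. norm (G w - (\<Sum>i\<le>n. a i * of_real w ^ i)) < \<delta> / B"
    using complex_polynomial_approx by blast
  have "norm (\<phi> x * (\<Sum>i<Suc n. a i * exp (of_real x) ^ i) - H x) < \<delta>" if "x \<in> K" for x
  proof -
    have "\<phi> x * (\<Sum>i<Suc n. a i * exp (of_real x) ^ i) - H x
        = \<phi> x * ((\<Sum>i\<le>n. a i * of_real (exp x) ^ i) - G (exp x))"
      using \<phi>_nonzero[OF that] by (simp add: G_def lessThan_Suc_atMost exp_of_real right_diff_distrib)
    then have "norm (\<phi> x * (\<Sum>i<Suc n. a i * exp (of_real x) ^ i) - H x)
        = norm (\<phi> x) * norm (G (exp x) - (\<Sum>i\<le>n. a i * of_real (exp x) ^ i))"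
      by (simp add: norm_mult norm_minus_commute)
    also have "\<dots> < B * (\<delta> / B)"
      using B[OF that] a that \<phi>_nonzero[OF that] by (intro mult_le_less_imp_less) auto
    finally show ?thesis
      using \<open>B > 0\<close> by simp
  qed
  then show ?thesis
    unfolding \<phi>_def by (intro exI[of _ "Suc n"] exI[of _ a]) auto
qed

lemma continuous_on_glue_disjoint_closed:
  fixes S :: "'i::finite \<Rightarrow> 'a::topological_space set" and g :: "'i \<Rightarrow> 'a \<Rightarrow> 'b::topological_space"
  assumes "\<And>i. closed (S i)" "\<And>i j. i \<noteq> j \<Longrightarrow> S i \<inter> S j = {}" "\<And>i. continuous_on (S i) (g i)"
  shows "\<exists>H. continuous_on (\<Union>i. S i) H \<and> (\<forall>i. \<forall>x\<in>S i. H x = g i x)"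
proof -
  define H where "H x = g (SOME i. x \<in> S i) x" for x
  have H: "H x = g i x" if "x \<in> S i" for i x
  proof -
    have "(SOME i. x \<in> S i) = i"
      using that assms(2) by (intro some_equality) blast+
    then show ?thesis
      by (simp add: H_def)
  qed
  have "continuous_on (\<Union>i. S i) H"
    using assms(1) continuous_on_eq[OF assms(3) H[symmetric]]
    by (intro continuous_on_closed_Union) auto
  with H show ?thesis
    by blast
qed

section \<open>Continuous pole placement along an arc\<close>

locale reachable_arc_family =
  fixes P :: "complex set" and \<gamma> :: "real \<Rightarrow> complex" and tinv :: "complex \<Rightarrow> real"
    and A :: "complex \<Rightarrow> complex^'n^'n" and b :: "complex \<Rightarrow> complex^'n" and L :: real
  assumes homeomorphism: "homeomorphism {0..1} P \<gamma> tinv"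
    and continuous_A: "continuous_on P A" and continuous_b: "continuous_on P b"
    and reachable: "\<And>\<theta>. \<theta> \<in> P \<Longrightarrow> reachable_pair (A \<theta>) (b \<theta>)"
    and norm_bound: "\<And>\<theta>. \<theta> \<in> P \<Longrightarrow> mat_l1norm (A \<theta>) < L"
begin

text \<open>Numbering 'n by to_nat, the k-th pole sweeps [L + 2 k, L + 2 k + 1] as \<theta> runs along
  the arc, so the poles are real, distinct and beyond the bound L on the spectrum.\<close>

definition pole :: "complex \<Rightarrow> 'n \<Rightarrow> real" where
  "pole \<theta> k = L + 2 * real (to_nat k) + tinv \<theta>"

definition pole_interval :: "'n \<Rightarrow> real set" where
  "pole_interval k = {L + 2 * real (to_nat k) .. L + 2 * real (to_nat k) + 1}"

abbreviation "poles \<theta> \<equiv> (\<lambda>k. complex_of_real (pole \<theta> k))"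
abbreviation "u \<theta> k \<equiv> resolvent_vec (A \<theta>) (b \<theta>) (poles \<theta> k)"
abbreviation "\<mu> \<theta> \<equiv> resolvent_coords (A \<theta>) (b \<theta>) (poles \<theta>) (b \<theta>)"
abbreviation "feedback \<theta> \<equiv> pole_feedback (A \<theta>) (b \<theta>) (poles \<theta>)"

lemma tinv_mem: "\<theta> \<in> P \<Longrightarrow> tinv \<theta> \<in> {0..1}"
  and gamma_tinv: "\<theta> \<in> P \<Longrightarrow> \<gamma> (tinv \<theta>) = \<theta>"
  and gamma_mem: "\<tau> \<in> {0..1} \<Longrightarrow> \<gamma> \<tau> \<in> P"
  and continuous_on_tinv: "continuous_on P tinv"
  and continuous_on_gamma: "continuous_on {0..1} \<gamma>"
  and image_gamma: "\<gamma> ` {0..1} = P"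
  using homeomorphism by (auto simp: homeomorphism_def)

lemma compact_P: "compact P"
  using compact_continuous_image[OF continuous_on_gamma] by (simp add: image_gamma)

lemma P_nonempty: "P \<noteq> {}"
  using gamma_mem[of 0] by auto

lemma L_pos: "L > 0"
proof -
  obtain \<theta> where "\<theta> \<in> P"
    using P_nonempty by blast
  then show ?thesis
    using norm_bound[of \<theta>] mat_l1norm_nonneg[of "A \<theta>"] by linarith
qed

lemma pole_mem: "\<theta> \<in> P \<Longrightarrow> pole \<theta> k \<in> pole_interval k"
  using tinv_mem[of \<theta>] by (simp add: pole_def pole_interval_def)

lemma pole_interval_pos: "x \<in> pole_interval k \<Longrightarrow> x > 0"
  using L_pos by (simp add: pole_interval_def)

lemma pole_intervals_disjoint: "k \<noteq> k' \<Longrightarrow> pole_interval k \<inter> pole_interval k' = {}"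
proof -
  assume "k \<noteq> k'"
  then have "to_nat k \<noteq> to_nat k'"
    by (simp add: inj_eq[OF inj_to_nat])
  then have "real (to_nat k) + 1 \<le> real (to_nat k') \<or> real (to_nat k') + 1 \<le> real (to_nat k)"
    by linarith
  then show ?thesis
    by (auto simp: pole_interval_def)
qed

lemma compact_pole_intervals: "compact (\<Union>k. pole_interval k)"
  unfolding pole_interval_def by (intro compact_UN) auto

lemma pole_placement_at: "\<theta> \<in> P \<Longrightarrow> pole_placement (A \<theta>) (b \<theta>) (poles \<theta>)"
proof unfold_locales
  assume "\<theta> \<in> P"
  then show "reachable_pair (A \<theta>) (b \<theta>)"
    by (rule reachable)
  show "inj (poles \<theta>)"
    by (rule injI) (simp add: pole_def inj_eq[OF inj_to_nat])
  show "det (A \<theta> - mat (poles \<theta> k)) \<noteq> 0" for k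
    using norm_bound[OF \<open>\<theta> \<in> P\<close>] pole_interval_pos[OF pole_mem[OF \<open>\<theta> \<in> P\<close>]]
      pole_mem[OF \<open>\<theta> \<in> P\<close>, of k]
    by (intro det_minus_mat_nonzero) (auto simp: pole_interval_def)
qed

lemma continuous_on_poles: "continuous_on P (\<lambda>\<theta>. poles \<theta> k)"
  unfolding pole_def by (intro continuous_intros continuous_on_tinv)

lemma continuous_on_resolvent_vec: "continuous_on P (\<lambda>\<theta>. u \<theta> k)"
  unfolding resolvent_vec_def
  using pole_placement.not_eigenvalue[OF pole_placement_at]
  by (intro continuous_on_cramer_solve continuous_intros continuous_A continuous_b
      continuous_on_mat continuous_on_poles) auto

lemma continuous_on_resolvent_mat: "continuous_on P (\<lambda>\<theta>. resolvent_mat (A \<theta>) (b \<theta>) (poles \<theta>))"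
  unfolding resolvent_mat_def
  by (intro continuous_on_vec_lambda continuous_intros continuous_on_resolvent_vec)

lemma continuous_on_resolvent_coords:
  "continuous_on P v \<Longrightarrow> continuous_on P (\<lambda>\<theta>. resolvent_coords (A \<theta>) (b \<theta>) (poles \<theta>) (v \<theta>))"
  unfolding resolvent_coords_def
  using pole_placement.det_resolvent_mat_nonzero[OF pole_placement_at]
  by (intro continuous_on_cramer_solve continuous_on_resolvent_mat) auto

lemma continuous_on_feedback: "continuous_on P feedback"
  unfolding pole_feedback_def
  using pole_placement.det_resolvent_mat_nonzero[OF pole_placement_at]
  by (intro continuous_on_cramer_solve continuous_on_transpose continuous_on_resolvent_mat
      continuous_on_const) auto

lemma target_coordinates:
  assumes "continuous_on P g"
  shows "\<exists>h. (\<forall>k. continuous_on P (h k)) \<and>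
    (\<forall>\<theta>\<in>P. g \<theta> = (\<Sum>k\<in>UNIV. (\<mu> \<theta> $ k * h k \<theta>) *s u \<theta> k))"
proof -
  define c where "c \<theta> = resolvent_coords (A \<theta>) (b \<theta>) (poles \<theta>) (g \<theta>)" for \<theta>
  have "continuous_on P (\<lambda>\<theta>. c \<theta> $ k / \<mu> \<theta> $ k)" for k
    unfolding c_def
    using pole_placement.resolvent_coords_input_nonzero[OF pole_placement_at]
    by (intro continuous_intros continuous_on_resolvent_coords assms continuous_b) auto
  moreover have "g \<theta> = (\<Sum>k\<in>UNIV. (\<mu> \<theta> $ k * (c \<theta> $ k / \<mu> \<theta> $ k)) *s u \<theta> k)" if "\<theta> \<in> P" for \<theta>
    using pole_placement.resolvent_coords_expansion[OF pole_placement_at[OF that], of "g \<theta>"]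
      pole_placement.resolvent_coords_input_nonzero[OF pole_placement_at[OF that]]
    by (simp add: c_def)
  ultimately show ?thesis
    by (intro exI[of _ "\<lambda>k \<theta>. c \<theta> $ k / \<mu> \<theta> $ k"]) auto
qed

lemma resolvent_expansion_bound:
  "\<exists>C>0. \<forall>\<theta>\<in>P. (\<Sum>k\<in>UNIV. norm (\<mu> \<theta> $ k) * norm (u \<theta> k)) \<le> C"
proof -
  have "continuous_on P (\<lambda>\<theta>. \<Sum>k\<in>UNIV. norm (\<mu> \<theta> $ k) * norm (u \<theta> k))"
    by (intro continuous_intros continuous_on_resolvent_coords continuous_b continuous_on_resolvent_vec)
  then have "bounded ((\<lambda>\<theta>. \<Sum>k\<in>UNIV. norm (\<mu> \<theta> $ k) * norm (u \<theta> k)) ` P)"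
    by (intro compact_imp_bounded compact_continuous_image compact_P)
  then show ?thesis
    unfolding bounded_pos real_norm_def by (auto dest: abs_le_D1)
qed

lemma interpolant_exists:
  assumes "\<And>k. continuous_on P (h k)"
  shows "\<exists>H. continuous_on (\<Union>k. pole_interval k) H \<and> (\<forall>\<theta>\<in>P. \<forall>k. H (pole \<theta> k) = h k \<theta>)"
proof -
  define c :: "'n \<Rightarrow> real" where "c k = L + 2 * real (to_nat k)" for k
  define g where "g k x = h k (\<gamma> (x - c k))" for k x
  have "continuous_on (pole_interval k) (g k)" for k
  proof -
    have shift: "(\<lambda>x. x - c k) ` pole_interval k \<subseteq> {0..1}"
      by (auto simp: pole_interval_def c_def)
    have "continuous_on (pole_interval k) (\<lambda>x. \<gamma> (x - c k))"
      by (rule continuous_on_compose2[OF continuous_on_gamma _ shift]) (intro continuous_intros)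
    moreover have "(\<lambda>x. \<gamma> (x - c k)) ` pole_interval k \<subseteq> P"
      using shift gamma_mem by auto
    ultimately show ?thesis
      unfolding g_def by (rule continuous_on_compose2[OF assms])
  qed
  moreover have "closed (pole_interval k)" for k
    by (simp add: pole_interval_def)
  ultimately obtain H where "continuous_on (\<Union>k. pole_interval k) H"
    and H: "\<forall>k. \<forall>x\<in>pole_interval k. H x = g k x"
    using continuous_on_glue_disjoint_closed[of pole_interval g] pole_intervals_disjoint by blast
  moreover have "H (pole \<theta> k) = h k \<theta>" if "\<theta> \<in> P" for \<theta> k
    using H pole_mem[OF that, of k] gamma_tinv[OF that] by (simp add: g_def pole_def c_def)
  ultimately show ?thesis
    by blast
qed

lemma closed_loop_response_approx:
  assumes "continuous_on P g" and "\<epsilon> > 0"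
    and dense: "\<And>H \<delta>. continuous_on (\<Union>k. pole_interval k) H \<Longrightarrow> \<delta> > 0 \<Longrightarrow>
                   \<exists>\<phi>\<in>F. \<forall>x\<in>(\<Union>k. pole_interval k). norm (\<phi> x - H x) < \<delta>"
  shows "\<exists>\<phi>\<in>F. (SUP \<theta>\<in>P. norm ((\<Sum>k\<in>UNIV. (\<mu> \<theta> $ k * \<phi> (pole \<theta> k)) *s u \<theta> k) - g \<theta>)) < \<epsilon>"
proof -
  obtain h where h: "\<forall>k. continuous_on P (h k)"
    and g_eq: "\<forall>\<theta>\<in>P. g \<theta> = (\<Sum>k\<in>UNIV. (\<mu> \<theta> $ k * h k \<theta>) *s u \<theta> k)"
    using target_coordinates[OF assms(1)] by (elim exE conjE)
  obtain C where "C > 0" and C: "\<forall>\<theta>\<in>P. (\<Sum>k\<in>UNIV. norm (\<mu> \<theta> $ k) * norm (u \<theta> k)) \<le> C"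
    using resolvent_expansion_bound by (elim exE conjE)
  have "\<exists>H. continuous_on (\<Union>k. pole_interval k) H \<and> (\<forall>\<theta>\<in>P. \<forall>k. H (pole \<theta> k) = h k \<theta>)"
    using h by (intro interpolant_exists) simp
  then obtain H where H_cont: "continuous_on (\<Union>k. pole_interval k) H"
    and H: "\<forall>\<theta>\<in>P. \<forall>k. H (pole \<theta> k) = h k \<theta>"
    by (elim exE conjE)
  have d_pos: "\<epsilon> / (2 * C) > 0"
    using \<open>C > 0\<close> \<open>\<epsilon> > 0\<close> by simp
  then obtain \<phi> where "\<phi> \<in> F" and \<phi>: "\<forall>x\<in>(\<Union>k. pole_interval k). norm (\<phi> x - H x) < \<epsilon> / (2 * C)"
    using dense[OF H_cont] by blast
  have "norm ((\<Sum>k\<in>UNIV. (\<mu> \<theta> $ k * \<phi> (pole \<theta> k)) *s u \<theta> k) - g \<theta>) \<le> \<epsilon> / 2" if "\<theta> \<in> P" for \<theta>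
  proof -
    let ?d = "\<epsilon> / (2 * C)"
    have "g \<theta> = (\<Sum>k\<in>UNIV. (\<mu> \<theta> $ k * H (pole \<theta> k)) *s u \<theta> k)"
      using g_eq H that by simp
    then have "norm ((\<Sum>k\<in>UNIV. (\<mu> \<theta> $ k * \<phi> (pole \<theta> k)) *s u \<theta> k) - g \<theta>)
        = norm (\<Sum>k\<in>UNIV. (\<mu> \<theta> $ k * (\<phi> (pole \<theta> k) - H (pole \<theta> k))) *s u \<theta> k)"
      by (simp add: sum_subtractf[symmetric] right_diff_distrib vector_sub_rdistrib)
    also have "\<dots> \<le> (\<Sum>k\<in>UNIV. norm (\<mu> \<theta> $ k) * norm (\<phi> (pole \<theta> k) - H (pole \<theta> k)) * norm (u \<theta> k))"
      by (intro order.trans[OF norm_sum] sum_mono) (simp add: norm_scale_vec norm_mult)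
    also have "\<dots> \<le> (\<Sum>k\<in>UNIV. norm (\<mu> \<theta> $ k) * ?d * norm (u \<theta> k))"
      using \<phi> pole_mem[OF that] by (intro sum_mono mult_right_mono mult_left_mono) (auto intro: less_imp_le)
    also have "\<dots> = ?d * (\<Sum>k\<in>UNIV. norm (\<mu> \<theta> $ k) * norm (u \<theta> k))"
      by (simp add: sum_distrib_left mult_ac)
    also have "\<dots> \<le> ?d * C"
      using C[rule_format, OF that] d_pos by (intro mult_left_mono) auto
    finally show ?thesis
      using \<open>C > 0\<close> by simp
  qed
  then have "(SUP \<theta>\<in>P. norm ((\<Sum>k\<in>UNIV. (\<mu> \<theta> $ k * \<phi> (pole \<theta> k)) *s u \<theta> k) - g \<theta>)) \<le> \<epsilon> / 2"
    using P_nonempty by (intro cSUP_least) auto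
  then show ?thesis
    using \<open>\<phi> \<in> F\<close> \<open>\<epsilon> > 0\<close> by (intro bexI[of _ \<phi>]) auto
qed

lemma UER_dt_closed_loop: "UER_dt P (\<lambda>\<theta>. A \<theta> + outer (b \<theta>) (feedback \<theta>)) b"
  unfolding UER_dt_def
proof (intro allI impI)
  fix g :: "complex \<Rightarrow> complex^'n" and \<epsilon> :: real
  assume "continuous_on P g" "\<epsilon> > 0"
  define response where "response T w x = (\<Sum>j<T. w (T - 1 - j) * complex_of_real x ^ j)"
    for T and w :: "nat \<Rightarrow> complex" and x
  have "\<exists>\<phi>\<in>range (case_prod response). \<forall>x\<in>(\<Union>k. pole_interval k). norm (\<phi> x - H x) < \<delta>"
    if approx_hyps: "continuous_on (\<Union>k. pole_interval k) H" "\<delta> > 0" for H \<delta>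
  proof -
    obtain T w where "\<forall>x\<in>(\<Union>k. pole_interval k). norm (response T w x - H x) < \<delta>"
      using polynomial_transfer_dense[OF compact_pole_intervals approx_hyps] unfolding response_def by blast
    then show ?thesis
      by (intro bexI[of _ "response T w"]) auto
  qed
  from closed_loop_response_approx[OF \<open>continuous_on P g\<close> \<open>\<epsilon> > 0\<close> this]
  obtain \<phi> where "\<phi> \<in> range (case_prod response)"
    and \<phi>: "(SUP \<theta>\<in>P. norm ((\<Sum>k\<in>UNIV. (\<mu> \<theta> $ k * \<phi> (pole \<theta> k)) *s u \<theta> k) - g \<theta>)) < \<epsilon>"
    by blast
  then obtain T w where "\<phi> = response T w"
    by auto
  with \<phi> have "(SUP \<theta>\<in>P. norm ((\<Sum>k\<in>UNIV. (\<mu> \<theta> $ k * response T w (pole \<theta> k)) *s u \<theta> k) - g \<theta>)) < \<epsilon>"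
    by simp
  moreover have "dt_endpoint (A \<theta> + outer (b \<theta>) (feedback \<theta>)) (b \<theta>) T w
      = (\<Sum>k\<in>UNIV. (\<mu> \<theta> $ k * response T w (pole \<theta> k)) *s u \<theta> k)" if "\<theta> \<in> P" for \<theta>
    unfolding response_def by (rule pole_placement.dt_endpoint_closed_loop[OF pole_placement_at[OF that]])
  ultimately have "(SUP \<theta>\<in>P. norm (dt_endpoint (A \<theta> + outer (b \<theta>) (feedback \<theta>)) (b \<theta>) T w - g \<theta>)) < \<epsilon>"
    by (simp cong: SUP_cong)
  then show "\<exists>T u. (SUP \<theta>\<in>P. norm (dt_endpoint (A \<theta> + outer (b \<theta>) (feedback \<theta>)) (b \<theta>) T u
      - g \<theta>)) < \<epsilon>"
    by blast
qed

lemma UER_ct_closed_loop: "UER_ct P (\<lambda>\<theta>. A \<theta> + outer (b \<theta>) (feedback \<theta>)) b"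
  unfolding UER_ct_def
proof (intro allI impI)
  fix g :: "complex \<Rightarrow> complex^'n" and \<epsilon> :: real
  assume "continuous_on P g" "\<epsilon> > 0"
  define response where "response m a x = (exp (complex_of_real x) - 1) / complex_of_real x
      * (\<Sum>i<m. a i * exp (complex_of_real x) ^ i)" for m and a :: "nat \<Rightarrow> complex" and x
  have "\<exists>\<phi>\<in>case_prod response ` ({0<..} \<times> UNIV). \<forall>x\<in>(\<Union>k. pole_interval k). norm (\<phi> x - H x) < \<delta>"
    if approx_hyps: "continuous_on (\<Union>k. pole_interval k) H" "\<delta> > 0" for H \<delta>
  proof -
    obtain m a where "m > 0" and "\<forall>x\<in>(\<Union>k. pole_interval k). norm (response m a x - H x) < \<delta>"
      using exponential_transfer_dense[OF compact_pole_intervals _ approx_hyps] pole_interval_pos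
      unfolding response_def by blast
    then show ?thesis
      by (intro bexI[of _ "response m a"]) auto
  qed
  from closed_loop_response_approx[OF \<open>continuous_on P g\<close> \<open>\<epsilon> > 0\<close> this]
  obtain \<phi> where "\<phi> \<in> case_prod response ` ({0<..} \<times> UNIV)"
    and \<phi>: "(SUP \<theta>\<in>P. norm ((\<Sum>k\<in>UNIV. (\<mu> \<theta> $ k * \<phi> (pole \<theta> k)) *s u \<theta> k) - g \<theta>)) < \<epsilon>"
    by blast
  then obtain m a where "m > 0" and "\<phi> = response m a"
    by auto
  with \<phi> have "(SUP \<theta>\<in>P. norm ((\<Sum>k\<in>UNIV. (\<mu> \<theta> $ k * response m a (pole \<theta> k)) *s u \<theta> k) - g \<theta>)) < \<epsilon>"
    by simp
  moreover have "ct_endpoint (A \<theta> + outer (b \<theta>) (feedback \<theta>)) (b \<theta>) (real m) (step_input m a)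
      = (\<Sum>k\<in>UNIV. (\<mu> \<theta> $ k * response m a (pole \<theta> k)) *s u \<theta> k)" if "\<theta> \<in> P" for \<theta>
  proof -
    have "poles \<theta> k \<noteq> 0" for k
      using pole_interval_pos[OF pole_mem[OF that, of k]] by simp
    then show ?thesis
      unfolding response_def by (rule pole_placement.ct_endpoint_closed_loop[OF pole_placement_at[OF that]])
  qed
  ultimately have "(SUP \<theta>\<in>P. norm (ct_endpoint (A \<theta> + outer (b \<theta>) (feedback \<theta>)) (b \<theta>) (real m)
      (step_input m a) - g \<theta>)) < \<epsilon>"
    by (simp cong: SUP_cong)
  with \<open>m > 0\<close> show "\<exists>T>0. \<exists>u. u absolutely_integrable_on {0..T} \<and>
      (SUP \<theta>\<in>P. norm (ct_endpoint (A \<theta> + outer (b \<theta>) (feedback \<theta>)) (b \<theta>) T u - g \<theta>)) < \<epsilon>"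
    using absolutely_integrable_step_input by (intro exI[of _ "real m"] conjI exI[of _ "step_input m a"]) auto
qed

end

theorem mainTheorem2:
  fixes P :: "complex set"
    and A :: "complex \<Rightarrow> complex^'n^'n"
    and b :: "complex \<Rightarrow> complex^'n"
  assumes "\<exists>\<gamma>. arc \<gamma> \<and> P = path_image \<gamma>"
    and "continuous_on P A"
    and "continuous_on P b"
    and "\<forall>\<theta>\<in>P. reachable_pair (A \<theta>) (b \<theta>)"
  shows "(\<exists>f :: complex \<Rightarrow> complex^'n. continuous_on P f \<and>
            UER_ct P (\<lambda>\<theta>. A \<theta> + outer (b \<theta>) (f \<theta>)) b)
       \<and> (\<exists>f :: complex \<Rightarrow> complex^'n. continuous_on P f \<and>
            UER_dt P (\<lambda>\<theta>. A \<theta> + outer (b \<theta>) (f \<theta>)) b)"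
proof -
  obtain \<gamma> where "arc \<gamma>" and P: "P = path_image \<gamma>"
    using assms(1) by blast
  then obtain tinv where hom: "homeomorphism {0..1} P \<gamma> tinv"
    using homeomorphism_arc by blast
  have "continuous_on P (\<lambda>\<theta>. mat_l1norm (A \<theta>))"
    unfolding mat_l1norm_def by (intro continuous_intros assms(2))
  moreover have "compact P"
    using \<open>arc \<gamma>\<close> P by (simp add: compact_path_image arc_imp_path)
  ultimately have "bounded ((\<lambda>\<theta>. mat_l1norm (A \<theta>)) ` P)"
    by (intro compact_imp_bounded compact_continuous_image)
  then obtain B where "\<And>\<theta>. \<theta> \<in> P \<Longrightarrow> mat_l1norm (A \<theta>) \<le> B"
    unfolding bounded_pos real_norm_def by (auto dest: abs_le_D1)
  then have "\<And>\<theta>. \<theta> \<in> P \<Longrightarrow> mat_l1norm (A \<theta>) < B + 1"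
    by fastforce
  then interpret reachable_arc_family P \<gamma> tinv A b "B + 1"
    using hom assms(2-4) by unfold_locales auto
  show ?thesis
    using continuous_on_feedback UER_ct_closed_loop UER_dt_closed_loop by (intro conjI exI[of _ feedback]) auto
qed

end
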